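(* Let $H$ be a complex Hilbert space and $\{\mathcal{U}(t)\}_{t\geq 0}$ a strongly continuous semigroup on $H$ with generator $\mathcal{L}$. Let $z\in D(\mathcal{L})$ with $z\neq 0$, let $\mathcal{P}:=(\cdot,z)(z,z)^{-1}z$ and $\mathcal{Q}:=1-\mathcal{P}$. Let $\{e^{\mathcal{LQ}t}\}_{t\geq 0}$ denote the strongly continuous semigroup generated by the operator $\mathcal{LQ}$ (with domain $D(\mathcal{LQ})=\{x\in H:\mathcal{Q}x\in D(\mathcal{L})\}$). Then $\{\mathcal{G}(t):=\mathcal{P}+\mathcal{Q}e^{\mathcal{LQ}t}\}_{t\geq 0}$ is a strongly continuous semigroup on $H$.
   Context: The scalar product $(\cdot,\cdot)$ on $H$ is conjugate-linear in its second argument. The generator is defined by $\mathcal{L}x:=\lim_{h\searrow 0}\frac1h[\mathcal{U}(h)x-x]$ on the domain $D(\mathcal{L})$ of all $x$ for which this limit exists in $H$. The notation $\{e^{\mathcal{A}t}\}_{t\ge0}$ means the strongly continuous semigroup generated by $\mathcal{A}$ (not an exponential series). *)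

theory Defs
  imports "HOL-Analysis.Analysis"
begin

definition complex_hilbert :: "(complex \<Rightarrow> 'a::banach \<Rightarrow> 'a) \<Rightarrow> ('a \<Rightarrow> 'a \<Rightarrow> complex) \<Rightarrow> bool" where
  "complex_hilbert sc ip \<longleftrightarrow>
     (\<forall>r x. sc (complex_of_real r) x = r *\<^sub>R x) \<and>
     (\<forall>a x y. sc a (x + y) = sc a x + sc a y) \<and>
     (\<forall>a b x. sc (a + b) x = sc a x + sc b x) \<and>
     (\<forall>a b x. sc a (sc b x) = sc (a * b) x) \<and>
     (\<forall>x y w. ip (x + y) w = ip x w + ip y w) \<and>
     (\<forall>c x y. ip (sc c x) y = c * ip x y) \<and>
     (\<forall>x y. ip y x = cnj (ip x y)) \<and>
     (\<forall>x. Im (ip x x) = 0 \<and> Re (ip x x) \<ge> 0) \<and>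
     (\<forall>x. ip x x = 0 \<longleftrightarrow> x = 0) \<and>
     (\<forall>x. norm x = sqrt (Re (ip x x)))"

definition cbounded_linear :: "(complex \<Rightarrow> 'a::banach \<Rightarrow> 'a) \<Rightarrow> ('a \<Rightarrow> 'a) \<Rightarrow> bool" where
  "cbounded_linear sc T \<longleftrightarrow> bounded_linear T \<and> (\<forall>c x. T (sc c x) = sc c (T x))"

text \<open>Strongly continuous semigroup (only the values for t \<ge> 0 matter).\<close>
definition C0_semigroup :: "(complex \<Rightarrow> 'a::banach \<Rightarrow> 'a) \<Rightarrow> (real \<Rightarrow> 'a \<Rightarrow> 'a) \<Rightarrow> bool" where
  "C0_semigroup sc U \<longleftrightarrow>
     (\<forall>t\<ge>0. cbounded_linear sc (U t)) \<and>
     U 0 = id \<and>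
     (\<forall>s\<ge>0. \<forall>t\<ge>0. U (s + t) = U s \<circ> U t) \<and>
     (\<forall>x. continuous_on {0..} (\<lambda>t. U t x))"

definition gen_domain :: "(real \<Rightarrow> 'a::real_normed_vector \<Rightarrow> 'a) \<Rightarrow> 'a set" where
  "gen_domain U = {x. \<exists>y. ((\<lambda>h. (1 / h) *\<^sub>R (U h x - x)) \<longlongrightarrow> y) (at_right 0)}"

definition generator :: "(real \<Rightarrow> 'a::real_normed_vector \<Rightarrow> 'a) \<Rightarrow> 'a \<Rightarrow> 'a" where
  "generator U x = Lim (at_right 0) (\<lambda>h. (1 / h) *\<^sub>R (U h x - x))"

definition generated_by :: "(real \<Rightarrow> 'a::real_normed_vector \<Rightarrow> 'a) \<Rightarrow> 'a set \<Rightarrow> ('a \<Rightarrow> 'a) \<Rightarrow> bool" where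
  "generated_by U D A \<longleftrightarrow> gen_domain U = D \<and> (\<forall>x\<in>D. generator U x = A x)"

end

theory Submission
  imports Defs
begin

text \<open>Since \<open>Q z = 0\<close>, the vector \<open>z\<close> lies in the domain of \<open>LQ\<close> and \<open>LQ z = L 0 = 0\<close>.
A vector in the kernel of a generator is fixed by its semigroup, because its orbit has
vanishing right derivative everywhere; hence \<open>V(t) = e\<^sup>L\<^sup>Q\<^sup>t\<close> fixes the range of \<open>P\<close>.
For an idempotent \<open>P\<close> whose range is fixed by a semigroup \<open>V\<close>, the identities
\<open>P\<^sup>2 = P\<close>, \<open>PQ = QP = 0\<close> and \<open>V(s) P = P\<close> reduce \<open>(P + Q V(s)) (P + Q V(t))\<close> to
\<open>P + Q V(s) V(t) - Q P V(t) = P + Q V(s + t)\<close>.\<close>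

lemma right_derivative_zero_norm_le:
  fixes f :: "real \<Rightarrow> 'a::real_normed_vector"
  assumes cont: "continuous_on {0..} f"
    and deriv: "\<And>s. s \<ge> 0 \<Longrightarrow> ((\<lambda>h. (1/h) *\<^sub>R (f (s+h) - f s)) \<longlongrightarrow> 0) (at_right 0)"
    and "e > 0" and "t \<ge> 0"
  shows "norm (f t - f 0) \<le> e * t"
proof (rule ccontr)
  txt \<open>By compactness there is a largest \<open>s \<le> t\<close> at which the bound holds; the small
    right difference quotient at \<open>s\<close> extends the bound slightly beyond \<open>s\<close>.\<close>
  assume not_le: "\<not> norm (f t - f 0) \<le> e * t"
  define g where "g s = norm (f s - f 0) - e * s" for s
  define A where "A = {0..t} \<inter> g -` {..0}"
  have "continuous_on {0..t} g"
    unfolding g_def by (intro continuous_intros continuous_on_subset[OF cont]) auto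
  then have "closed A"
    unfolding A_def by (intro continuous_closed_preimage) auto
  then have "compact A"
    by (simp add: compact_eq_bounded_closed A_def bounded_Int)
  moreover have "0 \<in> A"
    using \<open>t \<ge> 0\<close> by (simp add: A_def g_def)
  ultimately obtain s where "s \<in> A" and s_max: "\<forall>r\<in>A. r \<le> s"
    using compact_attains_sup by (metis empty_iff)
  then have "0 \<le> s" "s < t" and fs: "norm (f s - f 0) \<le> e * s"
    using not_le by (auto simp: A_def g_def order.order_iff_strict)
  have "\<forall>\<^sub>F h in at_right 0. norm ((1/h) *\<^sub>R (f (s+h) - f s)) < e"
    using tendstoD[OF deriv[OF \<open>0 \<le> s\<close>] \<open>e > 0\<close>] by (simp add: dist_norm)
  moreover have "\<forall>\<^sub>F h in at_right 0. h \<in> {0<..<t - s}"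
    using eventually_at_right_real \<open>s < t\<close> by simp
  ultimately have "\<exists>h. norm ((1/h) *\<^sub>R (f (s+h) - f s)) < e \<and> h \<in> {0<..<t - s}"
    by (intro eventually_happens'[of "at_right 0"] eventually_conj) simp_all
  then obtain h where h: "h \<in> {0<..<t - s}" and "norm ((1/h) *\<^sub>R (f (s+h) - f s)) < e"
    by blast
  then have "norm (f (s+h) - f s) < e * h"
    using pos_divide_less_eq[of h "norm (f (s+h) - f s)" e] by simp
  with fs have "norm (f (s+h) - f 0) \<le> e * (s + h)"
    using norm_triangle_ineq[of "f (s+h) - f s" "f s - f 0"] by (simp add: algebra_simps)
  then have "s + h \<in> A"
    using h \<open>0 \<le> s\<close> by (simp add: A_def g_def)
  with s_max h show False by fastforce
qed

lemma right_derivative_zero_imp_constant: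
  fixes f :: "real \<Rightarrow> 'a::real_normed_vector"
  assumes "continuous_on {0..} f"
    and "\<And>s. s \<ge> 0 \<Longrightarrow> ((\<lambda>h. (1/h) *\<^sub>R (f (s+h) - f s)) \<longlongrightarrow> 0) (at_right 0)"
    and "t \<ge> 0"
  shows "f t = f 0"
proof -
  have "norm (f t - f 0) \<le> e" if "e > 0" for e
  proof -
    have "norm (f t - f 0) \<le> e / (t + 1) * t"
      using right_derivative_zero_norm_le[OF assms(1,2), of "e / (t + 1)" t] that \<open>t \<ge> 0\<close> by simp
    also have "\<dots> \<le> e"
      using that \<open>t \<ge> 0\<close> by (simp add: field_simps)
    finally show ?thesis .
  qed
  then show ?thesis
    using field_le_epsilon[of "norm (f t - f 0)" 0] by simp
qed

lemma C0_semigroupD: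
  assumes "C0_semigroup sc U"
  shows C0_semigroup_bounded_linear: "t \<ge> 0 \<Longrightarrow> bounded_linear (U t)"
    and C0_semigroup_scale: "t \<ge> 0 \<Longrightarrow> U t (sc c x) = sc c (U t x)"
    and C0_semigroup_0: "U 0 = id"
    and C0_semigroup_add: "s \<ge> 0 \<Longrightarrow> t \<ge> 0 \<Longrightarrow> U (s + t) = U s \<circ> U t"
    and C0_semigroup_continuous_on: "continuous_on {0..} (\<lambda>t. U t x)"
  using assms unfolding C0_semigroup_def cbounded_linear_def by auto

lemma generator_tendsto:
  assumes "x \<in> gen_domain U"
  shows "((\<lambda>h. (1 / h) *\<^sub>R (U h x - x)) \<longlongrightarrow> generator U x) (at_right 0)"
proof -
  obtain y where y: "((\<lambda>h. (1 / h) *\<^sub>R (U h x - x)) \<longlongrightarrow> y) (at_right 0)"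
    using assms unfolding gen_domain_def by blast
  then have "generator U x = y"
    unfolding generator_def by (rule tendsto_Lim[OF trivial_limit_at_right_real])
  with y show ?thesis
    by simp
qed

lemma C0_semigroup_generator_0:
  assumes "C0_semigroup sc U"
  shows "0 \<in> gen_domain U" and "generator U 0 = 0"
proof -
  have "\<forall>\<^sub>F h in at_right 0. (1 / h) *\<^sub>R (U h 0 - 0) = 0"
    using eventually_at_right_less[of "0::real"]
    by eventually_elim (simp add: linear_simps C0_semigroup_bounded_linear[OF assms])
  then have "((\<lambda>h. (1 / h) *\<^sub>R (U h 0 - 0)) \<longlongrightarrow> 0) (at_right 0)"
    by (rule tendsto_eventually)
  then show "0 \<in> gen_domain U" and "generator U 0 = 0"
    unfolding gen_domain_def generator_def
    by (blast, rule tendsto_Lim[OF trivial_limit_at_right_real])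
qed

lemma C0_semigroup_fixes_generator_kernel:
  assumes U: "C0_semigroup sc U" and "x \<in> gen_domain U" "generator U x = 0" "t \<ge> 0"
  shows "U t x = x"
proof -
  have "((\<lambda>h. (1/h) *\<^sub>R (U (s + h) x - U s x)) \<longlongrightarrow> 0) (at_right 0)" if "s \<ge> 0" for s
  proof -
    interpret Us: bounded_linear "U s"
      using C0_semigroup_bounded_linear[OF U \<open>s \<ge> 0\<close>] .
    have "((\<lambda>h. U s ((1 / h) *\<^sub>R (U h x - x))) \<longlongrightarrow> 0) (at_right 0)"
      using Us.tendsto[OF generator_tendsto[OF \<open>x \<in> gen_domain U\<close>]] \<open>generator U x = 0\<close>
      by (simp add: Us.zero)
    moreover have "\<forall>\<^sub>F h in at_right 0. U s ((1 / h) *\<^sub>R (U h x - x)) = (1/h) *\<^sub>R (U (s + h) x - U s x)"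
      using eventually_at_right_less[of "0::real"]
    proof eventually_elim
      case (elim h)
      then have "U (s + h) x = U s (U h x)"
        using C0_semigroup_add[OF U \<open>s \<ge> 0\<close>, of h] by simp
      then show ?case
        by (simp add: Us.scaleR Us.diff)
    qed
    ultimately show ?thesis
      by (rule Lim_transform_eventually)
  qed
  from right_derivative_zero_imp_constant[OF C0_semigroup_continuous_on[OF U] this \<open>t \<ge> 0\<close>]
  show ?thesis
    by (simp add: C0_semigroup_0[OF U])
qed

lemma C0_semigroup_proj_plus_compl:
  assumes V: "C0_semigroup sc V"
    and sc_add: "\<And>c x y. sc c (x + y) = sc c x + sc c y"
    and P: "cbounded_linear sc P" and P_idem: "\<And>x. P (P x) = P x"
    and V_fixes_P: "\<And>t x. t \<ge> 0 \<Longrightarrow> V t (P x) = P x"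
    and Q_def: "Q = (\<lambda>x. x - P x)"
  shows "C0_semigroup sc (\<lambda>t x. P x + Q (V t x))"
proof -
  interpret P: bounded_linear P
    using P unfolding cbounded_linear_def by blast
  have P_scale: "P (sc c x) = sc c (P x)" for c x
    using P unfolding cbounded_linear_def by blast
  have sc_diff: "sc c (x - y) = sc c x - sc c y" for c x y
    using sc_add[of c "x - y" y] by (simp add: eq_diff_eq)
  have Q: "bounded_linear Q"
    unfolding Q_def by (intro bounded_linear_sub bounded_linear_ident P.bounded_linear)
  have PQ: "P (Q x) = 0" for x
    by (simp add: Q_def P.diff P_idem)
  have "P x + Q (V (s + t) x) = P (P x + Q (V t x)) + Q (V s (P x + Q (V t x)))"
    if "s \<ge> 0" "t \<ge> 0" for s t x
  proof -
    interpret Vs: bounded_linear "V s"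
      using C0_semigroup_bounded_linear[OF V \<open>s \<ge> 0\<close>] .
    have "V s (P x + Q (V t x)) = P x + V (s + t) x - P (V t x)"
      by (simp add: Q_def Vs.add Vs.diff V_fixes_P \<open>s \<ge> 0\<close> C0_semigroup_add[OF V that])
    then show ?thesis
      by (simp add: P.add PQ Q_def P.diff P_idem)
  qed
  moreover have "bounded_linear (\<lambda>x. P x + Q (V t x))" if "t \<ge> 0" for t
    using C0_semigroup_bounded_linear[OF V that]
    by (intro bounded_linear_add bounded_linear_compose[OF Q] P.bounded_linear)
  moreover have "P (sc c x) + Q (V t (sc c x)) = sc c (P x + Q (V t x))" if "t \<ge> 0" for t c x
    by (simp add: Q_def P_scale sc_add sc_diff C0_semigroup_scale[OF V that])
  moreover have "continuous_on {0..} (\<lambda>t. P x + Q (V t x))" for x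
    by (intro continuous_on_add continuous_on_const
        bounded_linear.continuous_on[OF Q C0_semigroup_continuous_on[OF V]])
  ultimately show ?thesis
    unfolding C0_semigroup_def cbounded_linear_def
    by (auto simp: C0_semigroup_0[OF V] Q_def)
qed

locale complex_hilbert_space =
  fixes sc :: "complex \<Rightarrow> 'a::banach \<Rightarrow> 'a" and ip :: "'a \<Rightarrow> 'a \<Rightarrow> complex"
  assumes sc_of_real: "\<And>r x. sc (complex_of_real r) x = r *\<^sub>R x"
    and sc_add: "\<And>c x y. sc c (x + y) = sc c x + sc c y"
    and sc_add_left: "\<And>a b x. sc (a + b) x = sc a x + sc b x"
    and sc_sc: "\<And>a b x. sc a (sc b x) = sc (a * b) x"
    and ip_add: "\<And>x y w. ip (x + y) w = ip x w + ip y w"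
    and ip_sc: "\<And>c x y. ip (sc c x) y = c * ip x y"
    and ip_commute: "\<And>x y. ip y x = cnj (ip x y)"
    and ip_self_real_nonneg: "\<And>x. Im (ip x x) = 0 \<and> Re (ip x x) \<ge> 0"
    and ip_self_eq_0_iff: "\<And>x. ip x x = 0 \<longleftrightarrow> x = 0"
    and norm_eq_sqrt_ip: "\<And>x. norm x = sqrt (Re (ip x x))"
begin

lemma power2_norm_eq_ip: "(norm x)\<^sup>2 = Re (ip x x)"
  using ip_self_real_nonneg by (simp add: norm_eq_sqrt_ip)

lemma ip_diff: "ip (x - y) w = ip x w - ip y w"
  using ip_add[of "x - y" y w] by (simp add: eq_diff_eq)

lemma ip_add_right: "ip w (x + y) = ip w x + ip w y"
  using ip_commute[of w "x + y"] ip_add[of x y w] ip_commute[of w x] ip_commute[of w y] by simp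

lemma ip_sc_right: "ip x (sc c y) = cnj c * ip x y"
  using ip_commute[of x "sc c y"] ip_sc[of c y x] ip_commute[of x y] by simp

definition orth_proj :: "'a \<Rightarrow> 'a \<Rightarrow> 'a" where
  "orth_proj z x = sc (ip x z / ip z z) z"

lemma ip_orth_proj_compl: "z \<noteq> 0 \<Longrightarrow> ip (x - orth_proj z x) z = 0"
  by (simp add: orth_proj_def ip_diff ip_sc ip_self_eq_0_iff)

lemma power2_norm_orth_proj:
  assumes "z \<noteq> 0"
  shows "(norm x)\<^sup>2 = (norm (orth_proj z x))\<^sup>2 + (norm (x - orth_proj z x))\<^sup>2"
proof -
  define p q where "p = orth_proj z x" and "q = x - orth_proj z x"
  have "ip q p = 0" and "ip p q = 0"
    using ip_orth_proj_compl[OF assms, of x] ip_commute[of q z]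
    by (simp_all add: p_def q_def orth_proj_def ip_sc ip_sc_right)
  then have "ip (p + q) (p + q) = ip p p + ip q q"
    by (simp add: ip_add ip_add_right)
  then show ?thesis
    by (simp add: p_def q_def power2_norm_eq_ip)
qed

lemma cbounded_linear_orth_proj:
  assumes "z \<noteq> 0"
  shows "cbounded_linear sc (orth_proj z)"
  unfolding cbounded_linear_def
proof (intro conjI allI bounded_linear_intro)
  show "orth_proj z (x + y) = orth_proj z x + orth_proj z y" for x y
    by (simp add: orth_proj_def ip_add add_divide_distrib sc_add_left)
  show sc: "orth_proj z (sc c x) = sc c (orth_proj z x)" for c x
    by (simp add: orth_proj_def ip_sc sc_sc)
  show "orth_proj z (r *\<^sub>R x) = r *\<^sub>R orth_proj z x" for r x
    using sc[of "complex_of_real r" x] by (simp add: sc_of_real)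
  show "norm (orth_proj z x) \<le> norm x * 1" for x
    using power2_norm_orth_proj[OF assms, of x] by (simp add: power2_le_imp_le)
qed

lemma orth_proj_self: "z \<noteq> 0 \<Longrightarrow> orth_proj z z = z"
  using sc_of_real[of 1 z] by (simp add: orth_proj_def ip_self_eq_0_iff)

lemma orth_proj_idem: "z \<noteq> 0 \<Longrightarrow> orth_proj z (orth_proj z x) = orth_proj z x"
  by (simp add: orth_proj_def ip_sc ip_self_eq_0_iff)

end

lemma complex_hilbert_space_iff: "complex_hilbert_space sc ip \<longleftrightarrow> complex_hilbert sc ip"
  unfolding complex_hilbert_space_def complex_hilbert_def by (simp only: conj_assoc)

theorem lemma1:
  fixes sc :: "complex \<Rightarrow> 'a::banach \<Rightarrow> 'a"
    and ip :: "'a \<Rightarrow> 'a \<Rightarrow> complex"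
    and U V :: "real \<Rightarrow> 'a \<Rightarrow> 'a"
    and z :: 'a
    and P Q :: "'a \<Rightarrow> 'a"
  assumes H: "complex_hilbert sc ip"
    and U: "C0_semigroup sc U"
    and z: "z \<in> gen_domain U" "z \<noteq> 0"
    and P_def: "P = (\<lambda>x. sc (ip x z / ip z z) z)"
    and Q_def: "Q = (\<lambda>x. x - P x)"
    and V: "C0_semigroup sc V"
    and V_gen: "generated_by V {x. Q x \<in> gen_domain U} (\<lambda>x. generator U (Q x))"
  shows "C0_semigroup sc (\<lambda>t x. P x + Q (V t x))"
proof -
  interpret complex_hilbert_space sc ip
    using H by (simp add: complex_hilbert_space_iff)
  have P_eq: "P = orth_proj z"
    by (simp add: P_def orth_proj_def fun_eq_iff)
  have "Q z = 0"
    by (simp add: Q_def P_eq orth_proj_self z(2))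
  then have "z \<in> gen_domain V" and "generator V z = 0"
    using V_gen C0_semigroup_generator_0[OF U] by (auto simp: generated_by_def)
  then have "V t z = z" if "t \<ge> 0" for t
    using C0_semigroup_fixes_generator_kernel[OF V] that by blast
  then have "V t (P x) = P x" if "t \<ge> 0" for t x
    using C0_semigroup_scale[OF V that] by (simp add: P_def that)
  then show ?thesis
    using C0_semigroup_proj_plus_compl[OF V sc_add _ _ _ Q_def]
      cbounded_linear_orth_proj[OF z(2)] orth_proj_idem[OF z(2)]
    by (simp add: P_eq)
qed

end
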